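(* Let $\Gamma$ be a weighted digraph with vertex set $\{1,\dots,n\}$, $n>1$, without loops and with strictly positive arc weights, with Laplacian matrix $L$ and matrices of in-forests $Q_k$. Then each $Q_k$, $k=0,1,\dots$, commutes with every matrix that commutes with $L$; in particular the matrices $Q_k$ commute with $L$, with $Q(\tau)=\sum_{k\ge0}Q_k\tau^k$ for every $\tau$, and with each other.
   Context: $W=(w_{ij})$ is the matrix of arc weights ($w_{ij}>0$ iff there is an arc $i\to j$, else $0$). The Laplacian $L=(\ell_{ij})$: $\ell_{ij}=-w_{ij}$ for $j\ne i$, $\ell_{ii}=\sum_{k\ne i}w_{ik}$. The weight of a subgraph is the product of its arc weights (1 if no arcs); the weight of a set of subgraphs is the sum of their weights (0 for the empty set). A converging tree is a weakly connected digraph with one vertex (the root) of outdegree 0 and all others of outdegree 1; an in-forest is a spanning subgraph of $\Gamma$ whose weak components are converging trees. $Q_k=(q^k_{ij})$ where $q^k_{ij}$ is the total weight of in-forests with $k$ arcs in which $i$ lies in a tree rooted at $j$ (so $Q_k=0$ for large $k$ and the sum defining $Q(\tau)$ is finite). *)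

theory Defs
  imports "HOL-Analysis.Analysis"
begin

text \<open>Vertices are the elements of a finite type 'n (standing for {1..n}).
  W $ i $ j is the weight of the arc i -> j (an arc exists iff W $ i $ j > 0).
  A spanning subgraph is represented by its set of arcs.\<close>

definition arcs :: "real^'n^'n \<Rightarrow> ('n \<times> 'n) set" where
  "arcs W = {(i,j). W $ i $ j > 0}"

definition laplacian :: "real^'n^'n \<Rightarrow> real^'n^'n" where
  "laplacian W = (\<chi> i j. if i = j then (\<Sum>k\<in>UNIV - {i}. W $ i $ k) else - W $ i $ j)"

definition sg_weight :: "real^'n^'n \<Rightarrow> ('n \<times> 'n) set \<Rightarrow> real" where
  "sg_weight W F = (\<Prod>(i,j)\<in>F. W $ i $ j)"

definition outdeg :: "('n \<times> 'n) set \<Rightarrow> 'n \<Rightarrow> nat" where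
  "outdeg F i = card {j. (i,j) \<in> F}"

definition weakly_conn :: "('n \<times> 'n) set \<Rightarrow> 'n \<Rightarrow> 'n \<Rightarrow> bool" where
  "weakly_conn F i j \<longleftrightarrow> (i,j) \<in> (F \<union> F\<inverse>)\<^sup>*"

definition weak_component :: "('n \<times> 'n) set \<Rightarrow> 'n \<Rightarrow> 'n set" where
  "weak_component F i = {j. weakly_conn F i j}"

text \<open>A weak component C (with the arcs of F inside it) is a converging tree:
  exactly one vertex (the root) of outdegree 0, all others of outdegree 1.
  Weak connectedness holds by construction of the component.\<close>
definition converging_tree_comp :: "('n \<times> 'n) set \<Rightarrow> 'n set \<Rightarrow> bool" where
  "converging_tree_comp F C \<longleftrightarrow>
     (\<exists>!r. r \<in> C \<and> outdeg F r = 0) \<and> (\<forall>v\<in>C. outdeg F v = 0 \<or> outdeg F v = 1)"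

definition in_forest :: "real^'n^'n \<Rightarrow> ('n \<times> 'n) set \<Rightarrow> bool" where
  "in_forest W F \<longleftrightarrow> F \<subseteq> arcs W \<and>
     (\<forall>i. converging_tree_comp F (weak_component F i))"

definition in_tree_rooted_at :: "('n \<times> 'n) set \<Rightarrow> 'n \<Rightarrow> 'n \<Rightarrow> bool" where
  "in_tree_rooted_at F i j \<longleftrightarrow> j \<in> weak_component F i \<and> outdeg F j = 0"

definition Qmat :: "real^'n^'n \<Rightarrow> nat \<Rightarrow> real^'n^'n" where
  "Qmat W k = (\<chi> i j. sum (sg_weight W)
      {F. in_forest W F \<and> card F = k \<and> in_tree_rooted_at F i j})"

text \<open>Q(tau) = sum_{k>=0} Q_k tau^k (a finite sum, since Q_k = 0 for large k).\<close>
definition Qtau :: "real^'n^'n \<Rightarrow> real \<Rightarrow> real^'n^'n" where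
  "Qtau W \<tau> = (\<Sum>k. (\<tau> ^ k) *\<^sub>R Qmat W k)"

end

theory Submission
  imports Defs
begin

text \<open>The heart of the proof is the recurrence
  L Q_k = sigma_{k+1} I - Q_{k+1}, where sigma_{k+1} is the total weight of the in-forests
  with k+1 arcs. Entrywise, (L Q_k)_{ij} = sum_m w_im (q_ij - q_mj) is a sum over pairs of an
  in-forest F with k arcs and a vertex m. If i is a root of F, adding the arc i -> m is a
  weight-preserving bijection onto the in-forests with k+1 arcs in which i is not a root.
  If F contains an arc i -> p, redirecting it to m yields a summand that is antisymmetric
  in p and m, so these pairs cancel. As Q_0 = I, induction puts every Q_k into the double
  commutant of L, which is closed under products, differences and scalar multiples; all
  claims follow from this.\<close>

section \<open>Roots in functional forests\<close>

definition forest :: "('a \<times> 'a) set \<Rightarrow> bool" where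
  "forest F \<longleftrightarrow> finite F \<and> single_valued F \<and> acyclic F"

definition tree_root :: "('a \<times> 'a) set \<Rightarrow> 'a \<Rightarrow> 'a" where
  "tree_root F x = (THE r. (x, r) \<in> F\<^sup>* \<and> r \<notin> Domain F)"

lemma forest_insert_iff:
  assumes "a \<notin> Domain F"
  shows "forest (insert (a, b) F) \<longleftrightarrow> forest F \<and> (b, a) \<notin> F\<^sup>*"
  using assms by (auto simp: forest_def single_valued_def)

lemma forest_ex_sink:
  assumes "forest F"
  shows "\<exists>r. (x, r) \<in> F\<^sup>* \<and> r \<notin> Domain F"
proof -
  have "wf (F\<inverse>)"
    using assms by (simp add: forest_def finite_acyclic_wf_converse)
  then show ?thesis
  proof (induction x rule: wf_induct_rule)
    case (less x)
    show ?case
    proof (cases "x \<in> Domain F")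
      case True
      then obtain y where "(x, y) \<in> F" by auto
      with less obtain r where "(y, r) \<in> F\<^sup>*" "r \<notin> Domain F" by auto
      with \<open>(x, y) \<in> F\<close> show ?thesis by (meson converse_rtrancl_into_rtrancl)
    qed auto
  qed
qed

lemma single_valued_sink_unique:
  assumes "single_valued F"
    and "(x, a) \<in> F\<^sup>*" "a \<notin> Domain F" "(x, b) \<in> F\<^sup>*" "b \<notin> Domain F"
  shows "a = b"
  using assms(2,4,5)
proof (induction x arbitrary: b rule: converse_rtrancl_induct)
  case base
  then show ?case using assms(3) by (auto elim: converse_rtranclE)
next
  case (step x y)
  then obtain y' where "(x, y') \<in> F" "(y', b) \<in> F\<^sup>*"
    by (auto elim: converse_rtranclE)
  with step assms(1) show ?case by (auto dest: single_valuedD)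
qed

lemma tree_root_eq_iff:
  assumes "forest F"
  shows "tree_root F x = r \<longleftrightarrow> (x, r) \<in> F\<^sup>* \<and> r \<notin> Domain F"
proof -
  obtain r0 where r0: "(x, r0) \<in> F\<^sup>*" "r0 \<notin> Domain F"
    using forest_ex_sink[OF assms] by blast
  have unique: "r' = r0" if "(x, r') \<in> F\<^sup>*" "r' \<notin> Domain F" for r'
    using assms r0 that by (intro single_valued_sink_unique[of F x]) (auto simp: forest_def)
  have "tree_root F x = r0"
    unfolding tree_root_def using r0 unique by (intro the_equality) blast+
  then show ?thesis
    using r0 unique by blast
qed

lemma tree_root_rtrancl: "forest F \<Longrightarrow> (x, y) \<in> F\<^sup>* \<Longrightarrow> tree_root F x = tree_root F y"
  by (meson rtrancl_trans tree_root_eq_iff)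

lemma tree_root_sink: "forest F \<Longrightarrow> x \<notin> Domain F \<Longrightarrow> tree_root F x = x"
  by (simp add: tree_root_eq_iff)

lemma tree_root_weakly_conn:
  assumes "forest F" "(x, y) \<in> (F \<union> F\<inverse>)\<^sup>*"
  shows "tree_root F x = tree_root F y"
  using assms(2)
proof (induction rule: rtrancl_induct)
  case (step y z)
  then show ?case
    using tree_root_rtrancl[OF assms(1)] by (metis UnE converseD r_into_rtrancl)
qed simp

lemma tree_root_insert:
  assumes "forest F" "a \<notin> Domain F" "(b, a) \<notin> F\<^sup>*"
  shows "tree_root (insert (a, b) F) x = (if tree_root F x = a then tree_root F b else tree_root F x)"
proof -
  let ?G = "insert (a, b) F"
  have G: "forest ?G"
    using assms by (simp add: forest_insert_iff)
  have reach: "(y, tree_root F y) \<in> ?G\<^sup>*" for y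
    using tree_root_eq_iff[OF assms(1)] rtrancl_mono[of F ?G] by blast
  have sink: "tree_root F y \<notin> Domain ?G" if "tree_root F y \<noteq> a" for y
    using tree_root_eq_iff[OF assms(1)] that by blast
  show ?thesis
  proof (cases "tree_root F x = a")
    case True
    have "(x, tree_root F b) \<in> ?G\<^sup>*"
      using reach[of x] reach[of b] True by (metis insertI1 rtrancl.rtrancl_into_rtrancl rtrancl_trans)
    moreover have "tree_root F b \<noteq> a"
      using assms(3) tree_root_eq_iff[OF assms(1)] by blast
    ultimately show ?thesis
      using True sink tree_root_eq_iff[OF G] by simp
  next
    case False
    then show ?thesis
      using reach sink tree_root_eq_iff[OF G] by simp
  qed
qed

section \<open>In-forests\<close>

lemma single_valued_weakly_conn_sink:
  assumes "single_valued F" "r \<notin> Domain F" "(x, r) \<in> (F \<union> F\<inverse>)\<^sup>*"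
  shows "(x, r) \<in> F\<^sup>*"
  using assms(3)
proof (induction rule: converse_rtrancl_induct)
  case (step x y)
  show ?case
  proof (cases "(x, y) \<in> F")
    case True
    then show ?thesis using step.IH by (meson converse_rtrancl_into_rtrancl)
  next
    case False
    then have "(y, x) \<in> F" using step.hyps(1) by auto
    moreover obtain y' where "(y, y') \<in> F" "(y', r) \<in> F\<^sup>*"
      using step.IH assms(2) calculation by (auto elim: converse_rtranclE)
    ultimately show ?thesis using assms(1) by (auto dest: single_valuedD)
  qed
qed simp

lemma single_valued_acyclicI:
  assumes "single_valued F" "\<And>x. \<exists>r. (x, r) \<in> F\<^sup>* \<and> r \<notin> Domain F"
  shows "acyclic F"
proof -
  have cycle: "(y, y) \<in> F\<^sup>+" if "(x, x) \<in> F\<^sup>+" "(x, y) \<in> F\<^sup>*" for x y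
    using that(2)
  proof (induction rule: rtrancl_induct)
    case (step y z)
    then obtain z' where "(y, z') \<in> F" "(z', y) \<in> F\<^sup>*"
      by (auto dest: tranclD)
    with step.hyps(2) assms(1) have "(z, y) \<in> F\<^sup>*"
      by (auto dest: single_valuedD)
    with step.hyps(2) show ?case
      by (meson rtrancl_into_trancl1)
  qed (use that(1) in simp)
  show ?thesis
    unfolding acyclic_def
  proof (intro allI notI)
    fix x assume "(x, x) \<in> F\<^sup>+"
    obtain r where "(x, r) \<in> F\<^sup>*" "r \<notin> Domain F"
      using assms(2) by blast
    with cycle[OF \<open>(x, x) \<in> F\<^sup>+\<close>] show False
      by (auto dest: tranclD)
  qed
qed

lemma outdeg_eq_0_iff: "outdeg F x = 0 \<longleftrightarrow> x \<notin> Domain F"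
  for F :: "('n::finite \<times> 'n) set"
  unfolding outdeg_def by auto

lemma single_valued_iff_outdeg_le_1: "single_valued F \<longleftrightarrow> (\<forall>x. outdeg F x \<le> 1)"
  for F :: "('n::finite \<times> 'n) set"
  unfolding outdeg_def single_valued_def by (auto simp: card_le_Suc0_iff_eq)

lemma in_forest_iff: "in_forest W F \<longleftrightarrow> F \<subseteq> arcs W \<and> forest F"
proof
  assume H: "in_forest W F"
  have own: "x \<in> weak_component F x" for x
    by (simp add: weak_component_def weakly_conn_def)
  have "outdeg F x = 0 \<or> outdeg F x = 1" for x
    using H own unfolding in_forest_def converging_tree_comp_def by blast
  then have sv: "single_valued F"
    unfolding single_valued_iff_outdeg_le_1 by (metis le_0_eq le_refl zero_le_one)
  have "\<exists>r. (x, r) \<in> F\<^sup>* \<and> r \<notin> Domain F" for x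
  proof -
    obtain r where "r \<in> weak_component F x" "r \<notin> Domain F"
      using H unfolding in_forest_def converging_tree_comp_def outdeg_eq_0_iff by blast
    then show ?thesis
      using single_valued_weakly_conn_sink[OF sv]
      unfolding weak_component_def weakly_conn_def by blast
  qed
  with H sv show "F \<subseteq> arcs W \<and> forest F"
    using single_valued_acyclicI unfolding in_forest_def forest_def by auto
next
  assume H: "F \<subseteq> arcs W \<and> forest F"
  then have forest: "forest F" by simp
  have weak: "(x, y) \<in> (F \<union> F\<inverse>)\<^sup>*" if "(x, y) \<in> F\<^sup>*" for x y
    using that rtrancl_mono[of F "F \<union> F\<inverse>"] by blast
  have "converging_tree_comp F (weak_component F x)" for x
    unfolding converging_tree_comp_def
  proof (intro conjI ballI)
    show "\<exists>!r. r \<in> weak_component F x \<and> outdeg F r = 0"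
    proof (rule ex1I[of _ "tree_root F x"])
      show "tree_root F x \<in> weak_component F x \<and> outdeg F (tree_root F x) = 0"
        using tree_root_eq_iff[OF forest] weak
        unfolding weak_component_def weakly_conn_def outdeg_eq_0_iff by blast
    next
      fix r assume "r \<in> weak_component F x \<and> outdeg F r = 0"
      then show "r = tree_root F x"
        using tree_root_weakly_conn[OF forest, of x r] tree_root_sink[OF forest, of r]
        unfolding weak_component_def weakly_conn_def outdeg_eq_0_iff by auto
    qed
  next
    fix v
    have "outdeg F v \<le> 1"
      using forest single_valued_iff_outdeg_le_1 unfolding forest_def by blast
    then show "outdeg F v = 0 \<or> outdeg F v = 1"
      by arith
  qed
  with H show "in_forest W F"
    unfolding in_forest_def by auto
qed

lemma in_tree_rooted_at_iff:
  fixes F :: "('n::finite \<times> 'n) set"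
  assumes "forest F"
  shows "in_tree_rooted_at F i j \<longleftrightarrow> tree_root F i = j"
proof
  assume "in_tree_rooted_at F i j"
  then show "tree_root F i = j"
    using tree_root_weakly_conn[OF assms, of i j] tree_root_sink[OF assms, of j]
    unfolding in_tree_rooted_at_def weak_component_def weakly_conn_def outdeg_eq_0_iff by auto
next
  assume "tree_root F i = j"
  then show "in_tree_rooted_at F i j"
    using tree_root_eq_iff[OF assms, of i j] rtrancl_mono[of F "F \<union> F\<inverse>"]
    unfolding in_tree_rooted_at_def weak_component_def weakly_conn_def outdeg_eq_0_iff by blast
qed

lemma forest_Diff_arc:
  assumes "forest G" "(a, b) \<in> G"
  shows "a \<notin> Domain (G - {(a, b)})" "forest (G - {(a, b)})" "(b, a) \<notin> (G - {(a, b)})\<^sup>*"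
proof -
  show a: "a \<notin> Domain (G - {(a, b)})"
    using assms by (auto simp: forest_def dest: single_valuedD)
  have "insert (a, b) (G - {(a, b)}) = G"
    using assms(2) by blast
  then show "forest (G - {(a, b)})" "(b, a) \<notin> (G - {(a, b)})\<^sup>*"
    using assms(1) forest_insert_iff[OF a, of b] by auto
qed

section \<open>The recurrence for the forest matrices\<close>

definition forests :: "real^'n^'n \<Rightarrow> nat \<Rightarrow> ('n \<times> 'n) set set" where
  "forests W k = {F. F \<subseteq> arcs W \<and> forest F \<and> card F = k}"

definition forests_weight :: "real^'n^'n \<Rightarrow> nat \<Rightarrow> real" where
  "forests_weight W k = (\<Sum>F\<in>forests W k. sg_weight W F)"

definition attachable :: "real^'n^'n \<Rightarrow> 'n \<Rightarrow> ('n \<times> 'n) set \<Rightarrow> 'n set" where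
  "attachable W i H = {m. W $ i $ m > 0 \<and> (m, i) \<notin> H\<^sup>*}"

lemma finite_forests: "finite (forests W k)"
  by (rule finite_subset[of _ "Pow UNIV"]) auto

lemma Qmat_entry: "Qmat W k $ i $ j = (\<Sum>F\<in>forests W k. sg_weight W F * of_bool (tree_root F i = j))"
proof -
  have "{F. in_forest W F \<and> card F = k \<and> in_tree_rooted_at F i j} = {F \<in> forests W k. tree_root F i = j}"
    unfolding forests_def in_forest_iff using in_tree_rooted_at_iff by blast
  then have "Qmat W k $ i $ j = (\<Sum>F | F \<in> forests W k \<and> tree_root F i = j. sg_weight W F)"
    by (simp add: Qmat_def)
  then show ?thesis
    by (simp add: finite_forests Collect_conj_eq)
qed

lemma sg_weight_insert: "(a, b) \<notin> F \<Longrightarrow> sg_weight W (insert (a, b) F) = W $ a $ b * sg_weight W F"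
  unfolding sg_weight_def by simp

lemma sum_forests_attach_arc:
  "(\<Sum>G | G \<in> forests W (Suc k) \<and> i \<in> Domain G. g G)
     = (\<Sum>H | H \<in> forests W k \<and> i \<notin> Domain H. \<Sum>m\<in>attachable W i H. g (insert (i, m) H))"
proof -
  let ?P = "Sigma {H. H \<in> forests W k \<and> i \<notin> Domain H} (attachable W i)"
  let ?attach = "\<lambda>(H, m). insert (i, m) H"
  have inj: "inj_on ?attach ?P"
    by (rule inj_onI) (clarsimp, metis Diff_insert_absorb DomainI insertE insertI1 prod.inject)
  have image: "?attach ` ?P = {G. G \<in> forests W (Suc k) \<and> i \<in> Domain G}"
  proof (intro equalityI subsetI)
    fix G assume "G \<in> ?attach ` ?P"
    then obtain H m where "H \<in> forests W k" "i \<notin> Domain H" "m \<in> attachable W i H"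
      and G: "G = insert (i, m) H" by auto
    moreover have "(i, m) \<notin> H"
      using \<open>i \<notin> Domain H\<close> by blast
    ultimately show "G \<in> {G. G \<in> forests W (Suc k) \<and> i \<in> Domain G}"
      by (auto simp: forests_def attachable_def arcs_def forest_insert_iff)
  next
    fix G assume "G \<in> {G. G \<in> forests W (Suc k) \<and> i \<in> Domain G}"
    then obtain m where G: "G \<in> forests W (Suc k)" "(i, m) \<in> G" by auto
    let ?H = "G - {(i, m)}"
    have "forest G" "G \<subseteq> arcs W" using G(1) by (auto simp: forests_def)
    then have "?H \<in> forests W k" "i \<notin> Domain ?H" "m \<in> attachable W i ?H"
      using G forest_Diff_arc[of G i m]
      by (auto simp: forests_def attachable_def arcs_def)
    moreover have "G = insert (i, m) ?H"
      using G(2) by blast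
    ultimately show "G \<in> ?attach ` ?P"
      by (intro image_eqI[of _ _ "(?H, m)"]) auto
  qed
  have "(\<Sum>H | H \<in> forests W k \<and> i \<notin> Domain H. \<Sum>m\<in>attachable W i H. g (insert (i, m) H))
      = sum (g \<circ> ?attach) ?P"
    by (simp add: sum.Sigma finite_forests split_def)
  also have "\<dots> = sum g (?attach ` ?P)"
    using inj by (simp add: sum.reindex)
  finally show ?thesis
    using image by simp
qed

lemma sum_sum_antisym_eq_0:
  fixes f :: "'a \<Rightarrow> 'a \<Rightarrow> 'b::linordered_ab_group_add"
  assumes "\<And>x y. x \<in> A \<Longrightarrow> y \<in> A \<Longrightarrow> f y x = - f x y"
  shows "(\<Sum>x\<in>A. \<Sum>y\<in>A. f x y) = 0"
proof -
  have "(\<Sum>x\<in>A. \<Sum>y\<in>A. f x y) = (\<Sum>y\<in>A. \<Sum>x\<in>A. f x y)"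
    by (rule sum.swap)
  also have "\<dots> = (\<Sum>y\<in>A. \<Sum>x\<in>A. - f y x)"
    by (auto intro!: sum.cong assms)
  also have "\<dots> = - (\<Sum>y\<in>A. \<Sum>x\<in>A. f y x)"
    by (simp add: sum_negf)
  finally show ?thesis
    by simp
qed

lemma laplacian_terms_root_forests:
  assumes nonneg: "\<And>a b. W $ a $ b \<ge> 0"
  shows "(\<Sum>F | F \<in> forests W k \<and> i \<notin> Domain F. \<Sum>m\<in>UNIV.
            W $ i $ m * sg_weight W F * (of_bool (tree_root F i = j) - of_bool (tree_root F m = j)))
       = of_bool (i = j) * forests_weight W (Suc k) - Qmat W (Suc k) $ i $ j"
proof -
  let ?e = "\<lambda>G. sg_weight W G * (of_bool (i = j) - of_bool (tree_root G i = j))"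
  have attach: "(\<Sum>m\<in>UNIV.
        W $ i $ m * sg_weight W F * (of_bool (tree_root F i = j) - of_bool (tree_root F m = j)))
      = (\<Sum>m\<in>attachable W i F. ?e (insert (i, m) F))"
    if "F \<in> forests W k" "i \<notin> Domain F" for F
  proof -
    have F: "forest F"
      using that(1) by (simp add: forests_def)
    have root_i: "tree_root F i = i"
      using tree_root_sink[OF F that(2)] .
    have root_eq_i: "tree_root F m = i \<longleftrightarrow> (m, i) \<in> F\<^sup>*" for m
      using tree_root_eq_iff[OF F] that(2) by blast
    have "(\<Sum>m\<in>UNIV.
          W $ i $ m * sg_weight W F * (of_bool (tree_root F i = j) - of_bool (tree_root F m = j)))
        = (\<Sum>m\<in>attachable W i F.
          W $ i $ m * sg_weight W F * (of_bool (tree_root F i = j) - of_bool (tree_root F m = j)))"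
    proof (rule sum.mono_neutral_right)
      show "\<forall>m\<in>UNIV - attachable W i F.
          W $ i $ m * sg_weight W F * (of_bool (tree_root F i = j) - of_bool (tree_root F m = j)) = 0"
      proof
        fix m assume "m \<in> UNIV - attachable W i F"
        then have "W $ i $ m = 0 \<or> tree_root F m = i"
          using nonneg[of i m] root_eq_i by (auto simp: attachable_def)
        then show "W $ i $ m * sg_weight W F * (of_bool (tree_root F i = j) - of_bool (tree_root F m = j)) = 0"
          using root_i by auto
      qed
    qed auto
    also have "\<dots> = (\<Sum>m\<in>attachable W i F. ?e (insert (i, m) F))"
    proof (rule sum.cong[OF refl])
      fix m assume "m \<in> attachable W i F"
      then have "(m, i) \<notin> F\<^sup>*" "(i, m) \<notin> F"
        using that(2) by (auto simp: attachable_def)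
      then show "W $ i $ m * sg_weight W F * (of_bool (tree_root F i = j) - of_bool (tree_root F m = j))
          = ?e (insert (i, m) F)"
        using tree_root_insert[OF F that(2)] root_i by (simp add: sg_weight_insert)
    qed
    finally show ?thesis .
  qed
  have "(\<Sum>F | F \<in> forests W k \<and> i \<notin> Domain F. \<Sum>m\<in>UNIV.
            W $ i $ m * sg_weight W F * (of_bool (tree_root F i = j) - of_bool (tree_root F m = j)))
      = (\<Sum>F | F \<in> forests W k \<and> i \<notin> Domain F. \<Sum>m\<in>attachable W i F. ?e (insert (i, m) F))"
    by (rule sum.cong[OF refl], rule attach) auto
  also have "\<dots> = (\<Sum>G | G \<in> forests W (Suc k) \<and> i \<in> Domain G. ?e G)"
    by (rule sum_forests_attach_arc[symmetric])
  also have "\<dots> = (\<Sum>G\<in>forests W (Suc k). ?e G)"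
    by (rule sum.mono_neutral_left)
      (auto simp: finite_forests forests_def tree_root_sink)
  also have "\<dots> = of_bool (i = j) * forests_weight W (Suc k) - Qmat W (Suc k) $ i $ j"
    unfolding Qmat_entry forests_weight_def
    by (simp add: right_diff_distrib sum_subtractf sum_distrib_left mult.commute)
  finally show ?thesis .
qed

lemma laplacian_terms_nonroot_forests:
  assumes nonneg: "\<And>a b. W $ a $ b \<ge> 0"
  shows "(\<Sum>F | F \<in> forests W k \<and> i \<in> Domain F. \<Sum>m\<in>UNIV.
            W $ i $ m * sg_weight W F * (of_bool (tree_root F i = j) - of_bool (tree_root F m = j)))
       = 0"
proof (cases k)
  case 0
  then have no_forests: "{F. F \<in> forests W k \<and> i \<in> Domain F} = {}"
    by (auto simp: forests_def)
  show ?thesis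
    unfolding no_forests by simp
next
  case (Suc k')
  let ?t = "\<lambda>F m. W $ i $ m * sg_weight W F * (of_bool (tree_root F i = j) - of_bool (tree_root F m = j))"
  let ?a = "\<lambda>H p m. W $ i $ p * W $ i $ m * sg_weight W H
              * (of_bool (tree_root H p = j) - of_bool (tree_root H m = j))"
  \<comment> \<open>Redirecting the arc i -> p to i -> m makes the summand antisymmetric in p and m.\<close>
  have redirect: "(\<Sum>m\<in>UNIV. ?t (insert (i, p) H) m) = (\<Sum>m\<in>attachable W i H. ?a H p m)"
    if "H \<in> forests W k'" "i \<notin> Domain H" "p \<in> attachable W i H" for H p
  proof -
    have H: "forest H"
      using that(1) by (simp add: forests_def)
    have "(p, i) \<notin> H\<^sup>*" "(i, p) \<notin> H"
      using that(2,3) by (auto simp: attachable_def)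
    have root: "tree_root (insert (i, p) H) m = (if (m, i) \<in> H\<^sup>* then tree_root H p else tree_root H m)"
      for m
      using tree_root_insert[OF H that(2) \<open>(p, i) \<notin> H\<^sup>*\<close>] tree_root_eq_iff[OF H] that(2)
      by presburger
    have weight: "sg_weight W (insert (i, p) H) = W $ i $ p * sg_weight W H"
      using \<open>(i, p) \<notin> H\<close> by (rule sg_weight_insert)
    have "(\<Sum>m\<in>UNIV. ?t (insert (i, p) H) m) = (\<Sum>m\<in>attachable W i H. ?t (insert (i, p) H) m)"
    proof (rule sum.mono_neutral_right)
      show "\<forall>m\<in>UNIV - attachable W i H. ?t (insert (i, p) H) m = 0"
      proof
        fix m assume "m \<in> UNIV - attachable W i H"
        then have "W $ i $ m = 0 \<or> (m, i) \<in> H\<^sup>*"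
          using nonneg[of i m] by (auto simp: attachable_def)
        then show "?t (insert (i, p) H) m = 0"
          using root[of i] root[of m] by auto
      qed
    qed auto
    also have "\<dots> = (\<Sum>m\<in>attachable W i H. ?a H p m)"
      using root[of i] root weight by (intro sum.cong) (auto simp: attachable_def)
    finally show ?thesis .
  qed
  have "(\<Sum>F | F \<in> forests W k \<and> i \<in> Domain F. \<Sum>m\<in>UNIV. ?t F m)
      = (\<Sum>H | H \<in> forests W k' \<and> i \<notin> Domain H. \<Sum>p\<in>attachable W i H. \<Sum>m\<in>UNIV. ?t (insert (i, p) H) m)"
    unfolding Suc by (rule sum_forests_attach_arc)
  also have "\<dots> = (\<Sum>H | H \<in> forests W k' \<and> i \<notin> Domain H. \<Sum>p\<in>attachable W i H. \<Sum>m\<in>attachable W i H. ?a H p m)"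
    by (rule sum.cong[OF refl], rule sum.cong[OF refl], rule redirect) auto
  also have "\<dots> = 0"
    by (intro sum.neutral ballI sum_sum_antisym_eq_0) (simp add: algebra_simps)
  finally show ?thesis .
qed

lemma laplacian_terms_Qmat:
  assumes nonneg: "\<And>a b. W $ a $ b \<ge> 0"
  shows "(\<Sum>m\<in>UNIV. W $ i $ m * (Qmat W k $ i $ j - Qmat W k $ m $ j))
       = of_bool (i = j) * forests_weight W (Suc k) - Qmat W (Suc k) $ i $ j"
proof -
  let ?t = "\<lambda>F m. W $ i $ m * sg_weight W F * (of_bool (tree_root F i = j) - of_bool (tree_root F m = j))"
  have "(\<Sum>m\<in>UNIV. W $ i $ m * (Qmat W k $ i $ j - Qmat W k $ m $ j))
      = (\<Sum>m\<in>UNIV. \<Sum>F\<in>forests W k. ?t F m)"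
    unfolding Qmat_entry
    by (simp only: right_diff_distrib sum_subtractf sum_distrib_left mult.assoc)
  also have "\<dots> = (\<Sum>F\<in>forests W k. \<Sum>m\<in>UNIV. ?t F m)"
    by (rule sum.swap)
  also have "\<dots> = (\<Sum>F | F \<in> forests W k \<and> i \<notin> Domain F. \<Sum>m\<in>UNIV. ?t F m)
                + (\<Sum>F | F \<in> forests W k \<and> i \<in> Domain F. \<Sum>m\<in>UNIV. ?t F m)"
    by (subst sum.Int_Diff[OF finite_forests, of _ _ _ "{F. i \<notin> Domain F}"])
      (simp add: Collect_conj_eq set_diff_eq)
  also have "\<dots> = of_bool (i = j) * forests_weight W (Suc k) - Qmat W (Suc k) $ i $ j"
    using laplacian_terms_root_forests[OF nonneg] laplacian_terms_nonroot_forests[OF nonneg]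
    by simp
  finally show ?thesis .
qed

lemma laplacian_mult_entry:
  "(laplacian W ** X) $ i $ j = (\<Sum>m\<in>UNIV. W $ i $ m * (X $ i $ j - X $ m $ j))"
proof -
  have "(laplacian W ** X) $ i $ j
      = laplacian W $ i $ i * X $ i $ j + (\<Sum>m\<in>UNIV - {i}. laplacian W $ i $ m * X $ m $ j)"
    by (simp add: matrix_matrix_mult_def sum.remove)
  also have "\<dots> = (\<Sum>m\<in>UNIV - {i}. W $ i $ m * (X $ i $ j - X $ m $ j))"
    by (simp add: laplacian_def sum_distrib_right right_diff_distrib sum_subtractf sum_negf)
  also have "\<dots> = (\<Sum>m\<in>UNIV. W $ i $ m * (X $ i $ j - X $ m $ j))"
    by (simp add: sum.remove[of UNIV i "\<lambda>m. W $ i $ m * (X $ i $ j - X $ m $ j)"])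
  finally show ?thesis .
qed

lemma laplacian_mult_Qmat:
  assumes "\<And>a b. W $ a $ b \<ge> 0"
  shows "laplacian W ** Qmat W k = mat (forests_weight W (Suc k)) - Qmat W (Suc k)"
  by (simp add: vec_eq_iff laplacian_mult_entry laplacian_terms_Qmat[OF assms] mat_def)

lemma Qmat_0:
  fixes W :: "real^'n^'n"
  shows "Qmat W 0 = mat 1"
proof -
  have empty: "forest ({} :: ('n \<times> 'n) set)"
    by (simp add: forest_def acyclic_def)
  then have "forests W 0 = {{}}"
    by (auto simp: forests_def)
  moreover have "tree_root {} i = i" for i :: 'n
    using tree_root_sink[OF empty] by simp
  ultimately have "Qmat W 0 $ i $ j = of_bool (i = j)" for i j
    by (simp add: Qmat_entry sg_weight_def del: sum_of_bool_eq sum_mult_of_bool_eq)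
  then show ?thesis
    by (simp add: vec_eq_iff mat_def)
qed

lemma Qmat_eq_0:
  fixes W :: "real^'n^'n"
  assumes "k > CARD('n \<times> 'n)"
  shows "Qmat W k = 0"
proof -
  have "card F < k" for F :: "('n \<times> 'n) set"
    using assms card_mono[of UNIV F] by simp
  then have "forests W k = {}"
    by (auto simp: forests_def)
  then show ?thesis
    by (simp add: vec_eq_iff Qmat_entry)
qed

lemma Qtau_eq_sum:
  fixes W :: "real^'n^'n"
  shows "Qtau W \<tau> = (\<Sum>k\<le>CARD('n \<times> 'n). \<tau> ^ k *\<^sub>R Qmat W k)"
  unfolding Qtau_def by (rule suminf_finite) (auto simp: Qmat_eq_0)

section \<open>Commutants\<close>

lemma mat_matrix_mult_eq: "mat c ** A = (\<chi> i j. c * A $ i $ j)"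
  for c :: "'a::semiring_1"
  by (simp add: vec_eq_iff matrix_matrix_mult_def mat_def if_distrib if_distribR sum.delta cong: if_cong)

lemma matrix_mult_mat_eq: "A ** mat c = (\<chi> i j. A $ i $ j * c)"
  for c :: "'a::semiring_1"
  by (simp add: vec_eq_iff matrix_matrix_mult_def mat_def if_distrib if_distribR sum.delta' cong: if_cong)

definition commutant :: "('a::semiring_1^'n^'n) set \<Rightarrow> ('a^'n^'n) set" where
  "commutant S = {M. \<forall>A\<in>S. M ** A = A ** M}"

lemma commutantD: "A \<in> commutant S \<Longrightarrow> B \<in> S \<Longrightarrow> A ** B = B ** A"
  by (simp add: commutant_def)

lemma subset_commutant_commutant: "S \<subseteq> commutant (commutant S)"
  unfolding commutant_def by auto

lemma mat_in_commutant: "mat c \<in> commutant S"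
  for c :: "'a::comm_semiring_1"
  unfolding commutant_def by (simp add: mat_matrix_mult_eq matrix_mult_mat_eq mult.commute)

lemma mult_in_commutant:
  assumes "A \<in> commutant S" "B \<in> commutant S"
  shows "A ** B \<in> commutant S"
  unfolding commutant_def
proof (intro CollectI ballI)
  fix X assume "X \<in> S"
  then have "A ** X = X ** A" "B ** X = X ** B"
    using assms by (auto simp: commutant_def)
  then show "A ** B ** X = X ** (A ** B)"
    by (metis matrix_mul_assoc)
qed

lemma matrix_add_rdistrib: "(A + B) ** C = A ** C + B ** C"
  by (simp add: vec_eq_iff matrix_matrix_mult_def sum.distrib distrib_right)

lemma subspace_commutant: "subspace (commutant (S :: ('a::real_algebra_1^'n^'n) set))"
  unfolding subspace_def commutant_def
  by (simp add: matrix_add_ldistrib matrix_add_rdistrib scalar_matrix_assoc[symmetric] matrix_scalar_ac)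

lemma Qmat_in_commutant_commutant:
  assumes nonneg: "\<And>a b. W $ a $ b \<ge> 0"
  shows "Qmat W k \<in> commutant (commutant {laplacian W})"
proof (induction k)
  case 0
  then show ?case
    by (simp add: Qmat_0 mat_in_commutant)
next
  case (Suc k)
  have "laplacian W \<in> commutant (commutant {laplacian W})"
    using subset_commutant_commutant by blast
  with Suc.IH have "mat (forests_weight W (Suc k)) - laplacian W ** Qmat W k
      \<in> commutant (commutant {laplacian W})"
    by (intro subspace_diff[OF subspace_commutant] mat_in_commutant mult_in_commutant)
  then show ?case
    by (simp add: laplacian_mult_Qmat[OF nonneg])
qed

lemma Qmat_in_commutant:
  assumes "\<And>a b. W $ a $ b \<ge> 0"
  shows "Qmat W k \<in> commutant {laplacian W}"
proof -
  have "laplacian W \<in> commutant {laplacian W}"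
    by (simp add: commutant_def)
  then show ?thesis
    using Qmat_in_commutant_commutant[OF assms, of k] unfolding commutant_def by blast
qed

lemma Qtau_in_commutant:
  assumes "\<And>a b. W $ a $ b \<ge> 0"
  shows "Qtau W \<tau> \<in> commutant {laplacian W}"
  unfolding Qtau_eq_sum
  by (intro subspace_sum[OF subspace_commutant] subspace_scale[OF subspace_commutant]
      Qmat_in_commutant[OF assms])

theorem corollary3:
  fixes W :: "real^'n^'n"
  assumes "CARD('n) > 1"
    and "\<And>i. W $ i $ i = 0"
    and "\<And>i j. W $ i $ j \<ge> 0"
  shows "(\<forall>k. \<forall>M :: real^'n^'n. M ** laplacian W = laplacian W ** M
              \<longrightarrow> M ** Qmat W k = Qmat W k ** M)
       \<and> (\<forall>k. Qmat W k ** laplacian W = laplacian W ** Qmat W k)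
       \<and> (\<forall>k \<tau>. Qmat W k ** Qtau W \<tau> = Qtau W \<tau> ** Qmat W k)
       \<and> (\<forall>k m. Qmat W k ** Qmat W m = Qmat W m ** Qmat W k)"
proof -
  \<comment> \<open>The size of the vertex set and the loops are irrelevant: in-forests are acyclic and the
    Laplacian ignores the diagonal of W.\<close>
  have bicommutant: "Qmat W k \<in> commutant (commutant {laplacian W})" for k
    using Qmat_in_commutant_commutant assms(3) .
  have commutant: "Qmat W k \<in> commutant {laplacian W}" "Qtau W \<tau> \<in> commutant {laplacian W}" for k \<tau>
    using Qmat_in_commutant Qtau_in_commutant assms(3) by blast+
  show ?thesis
  proof (intro conjI allI impI)
    fix k and M :: "real^'n^'n"
    assume "M ** laplacian W = laplacian W ** M"
    then have "M \<in> commutant {laplacian W}"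
      by (simp add: commutant_def)
    then show "M ** Qmat W k = Qmat W k ** M"
      using commutantD[OF bicommutant] by metis
  next
    fix k
    show "Qmat W k ** laplacian W = laplacian W ** Qmat W k"
      using commutantD[OF commutant(1)] by simp
  next
    fix k \<tau>
    show "Qmat W k ** Qtau W \<tau> = Qtau W \<tau> ** Qmat W k"
      using commutantD[OF bicommutant commutant(2)] .
  next
    fix k m
    show "Qmat W k ** Qmat W m = Qmat W m ** Qmat W k"
      using commutantD[OF bicommutant commutant(1)] .
  qed
qed

end
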